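(* Let $P_0$ be a domain, $U$ a free $P_0$-module of rank four with dual $U^*=\operatorname{Hom}_{P_0}(U,P_0)$, and $x,y,z,w$ a basis of $U$ with dual basis $x^*,y^*,z^*,w^*$. Let $$\phi_3=ax^{*(2)}y^*+dx^*y^{*(2)}+ey^{*(2)}z^*+fy^{*(2)}w^*+hy^*z^{*(2)}+iz^{*(2)}w^*+ky^*w^{*(2)}+mx^*y^*z^*+nx^*y^*w^*+py^*z^*w^*\in D_3U^*$$ with parameters in $P_0$. Assume (a) $a\neq0$ in $P_0$, and (b) $\ell\phi_3\neq0$ for all nonzero $\ell\in U$. Then $\Gamma_{\phi_3}$ is not identically zero.
   Context: $D_iU^*=\operatorname{Hom}_{P_0}(\operatorname{Sym}_iU,P_0)$; $D_\bullet U^*$ is the divided power algebra, a module over $\operatorname{Sym}_\bullet U$ via $(uv)(u')=v(uu')$. The divided power monomial $x^{*(a_1)}y^{*(a_2)}z^{*(a_3)}w^{*(a_4)}$ takes value $1$ on $x^{a_1}y^{a_2}z^{a_3}w^{a_4}$ and $0$ on all other monomials of that degree; a factor without parenthesized exponent has exponent one. $D_4U$ is the degree-$4$ divided power of $U$. For $X\in D_4U$, $\Delta(X)\in U^{\otimes4}$ is its comultiplication: for $X=\ell_1^{(e_1)}\cdots\ell_s^{(e_s)}$ with $\sum e_j=4$, the sum of all distinct words $u_1\otimes\cdots\otimes u_4$ in which the symbol $\ell_j$ occurs exactly $e_j$ times, extended linearly. $\Gamma_{\phi_3}:D_4U\otimes\bigwedge^4U\to\bigwedge^4U^*$ is the $P_0$-linear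 map $\Gamma_{\phi_3}(X\otimes y_1\wedge\cdots\wedge y_4)=\sum(u_1y_1\phi_3)\wedge\cdots\wedge(u_4y_4\phi_3)$, summed over the terms of $\Delta(X)$. *)

theory Defs
  imports Main "HOL-Library.Multiset" "HOL-Combinatorics.Permutations"
begin

text \<open>U is free of rank 4 with basis x,y,z,w, indexed by 0,1,2,3.
  An element of U (resp. U^*) is given by its coordinates, a function nat => 'a
  of which only the values at 0..3 matter. A monomial of degree k in Sym_k U
  (resp. in D_k U) is a multiset of size k over {0..<4}. An element of
  D_k U^* = Hom(Sym_k U, P0) is given by its values on the monomials of degree k.\<close>

definition monoms :: "nat \<Rightarrow> nat multiset set" where
  "monoms k = {M. size M = k \<and> set_mset M \<subseteq> {..<4}}"

definition phi3 :: "'a::zero \<Rightarrow> 'a \<Rightarrow> 'a \<Rightarrow> 'a \<Rightarrow> 'a \<Rightarrow> 'a \<Rightarrow> 'a \<Rightarrow> 'a \<Rightarrow> 'a \<Rightarrow> 'a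
      \<Rightarrow> nat multiset \<Rightarrow> 'a" where
  "phi3 a d e f h i k m n p M =
     (if M = {#0,0,1#} then a
      else if M = {#0,1,1#} then d
      else if M = {#1,1,2#} then e
      else if M = {#1,1,3#} then f
      else if M = {#1,2,2#} then h
      else if M = {#2,2,3#} then i
      else if M = {#1,3,3#} then k
      else if M = {#0,1,2#} then m
      else if M = {#0,1,3#} then n
      else if M = {#1,2,3#} then p
      else 0)"

text \<open>Module action of U on the divided power algebra: (l phi)(M) = phi(l M).\<close>
definition act :: "(nat \<Rightarrow> 'a::comm_ring_1) \<Rightarrow> (nat multiset \<Rightarrow> 'a) \<Rightarrow> nat multiset \<Rightarrow> 'a" where
  "act l phi M = (\<Sum>i<4. l i * phi (add_mset i M))"

text \<open>The covector (u y phi) in D_1 U^* = U^*, as coordinates on the basis of U.\<close>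
definition covec :: "(nat multiset \<Rightarrow> 'a::comm_ring_1) \<Rightarrow> (nat \<Rightarrow> 'a) \<Rightarrow> (nat \<Rightarrow> 'a) \<Rightarrow> nat \<Rightarrow> 'a" where
  "covec phi u y j = act u (act y phi) {#j#}"

text \<open>Coefficient of v_0 \<and> v_1 \<and> v_2 \<and> v_3 on x^* \<and> y^* \<and> z^* \<and> w^* in the wedge power of U^*.\<close>
definition wedge4 :: "(nat \<Rightarrow> nat \<Rightarrow> 'a::comm_ring_1) \<Rightarrow> 'a" where
  "wedge4 v = (\<Sum>q | q permutes {..<4}. of_int (sign q) * (\<Prod>r<4. v r (q r)))"

definition basisU :: "nat \<Rightarrow> nat \<Rightarrow> 'a::zero_neq_one" where
  "basisU j = (\<lambda>i. if i = j then 1 else 0)"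

text \<open>Gamma_phi(X \<otimes> y_0 \<and> ... \<and> y_3), as coefficient of x^*\<and>y^*\<and>z^*\<and>w^*,
  where X = sum of c M times the divided power monomial M, and the
  comultiplication of a divided power monomial M is the sum of all distinct
  words ws with mset ws = M.\<close>
definition Gamma :: "(nat multiset \<Rightarrow> 'a::comm_ring_1) \<Rightarrow> (nat multiset \<Rightarrow> 'a)
      \<Rightarrow> (nat \<Rightarrow> nat \<Rightarrow> 'a) \<Rightarrow> 'a" where
  "Gamma phi c ys =
     (\<Sum>M\<in>monoms 4. c M * (\<Sum>ws\<in>{ws. mset ws = M}.
         wedge4 (\<lambda>r. covec phi (basisU (ws ! r)) (ys r))))"

end

theory Submission
  imports Defs "HOL-Combinatorics.Multiset_Permutations"
begin

text \<open>If Gamma vanished identically, pairing it with x \<and> y \<and> z \<and> w on the divided power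
  monomials x^(2) z^(2), x^(2) y^(2) and y^(4) would give a^2 i^2 = 0, a det S = 0 and
  v^T adj(S) v = 0, where S is the symmetric matrix with rows (a,m,n), (m,h,p), (n,p,k) and
  v = (d,e,f). Over a domain with a \<noteq> 0 these force a nonzero vector (l0,l2,l3) killed by S
  and by v: a nonzero column of adj S if there is one, and otherwise a vector in the kernel
  of the rank one matrix S. Since i = 0, the element l0 x + l2 z + l3 w of U then annihilates
  phi3, contradicting (b).\<close>

definition sym3_det :: "'a::comm_ring_1 \<Rightarrow> 'a \<Rightarrow> 'a \<Rightarrow> 'a \<Rightarrow> 'a \<Rightarrow> 'a \<Rightarrow> 'a" where
  "sym3_det s11 s12 s13 s22 s23 s33 =
     s11 * (s22*s33 - s23^2) - s12 * (s12*s33 - s13*s23) + s13 * (s12*s23 - s22*s13)"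

definition sym3_adjugate_form ::
    "'a::comm_ring_1 \<Rightarrow> 'a \<Rightarrow> 'a \<Rightarrow> 'a \<Rightarrow> 'a \<Rightarrow> 'a \<Rightarrow> 'a \<Rightarrow> 'a \<Rightarrow> 'a \<Rightarrow> 'a" where
  "sym3_adjugate_form s11 s12 s13 s22 s23 s33 v1 v2 v3 =
     v1^2 * (s22*s33 - s23^2) + v2^2 * (s11*s33 - s13^2) + v3^2 * (s11*s22 - s12^2)
     + 2*v1*v2 * (s13*s23 - s12*s33) + 2*v1*v3 * (s12*s23 - s13*s22)
     + 2*v2*v3 * (s12*s13 - s11*s23)"

lemma sym3_det_swap:
  "sym3_det s22 s12 s23 s11 s13 s33 = sym3_det s11 s12 s13 s22 s23 s33"
  "sym3_det s33 s23 s13 s22 s12 s11 = sym3_det s11 s12 s13 s22 s23 s33"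
  by (simp_all add: sym3_det_def algebra_simps power2_eq_square)

lemma sym3_adjugate_form_swap:
  "sym3_adjugate_form s22 s12 s23 s11 s13 s33 v2 v1 v3 =
     sym3_adjugate_form s11 s12 s13 s22 s23 s33 v1 v2 v3"
  "sym3_adjugate_form s33 s23 s13 s22 s12 s11 v3 v2 v1 =
     sym3_adjugate_form s11 s12 s13 s22 s23 s33 v1 v2 v3"
  by (simp_all add: sym3_adjugate_form_def algebra_simps power2_eq_square)

lemma sym3_adjugate_column_kernel_vector:
  fixes s11 s12 s13 s22 s23 s33 v1 v2 v3 :: "'a::idom"
  assumes det: "sym3_det s11 s12 s13 s22 s23 s33 = 0"
    and form: "sym3_adjugate_form s11 s12 s13 s22 s23 s33 v1 v2 v3 = 0"
    and column: "s22*s33 - s23^2 \<noteq> 0 \<or> s13*s23 - s12*s33 \<noteq> 0 \<or> s12*s23 - s13*s22 \<noteq> 0"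
  obtains x1 x2 x3 where "x1 \<noteq> 0 \<or> x2 \<noteq> 0 \<or> x3 \<noteq> 0"
    "s11*x1 + s12*x2 + s13*x3 = 0" "s12*x1 + s22*x2 + s23*x3 = 0" "s13*x1 + s23*x2 + s33*x3 = 0"
    "v1*x1 + v2*x2 + v3*x3 = 0"
proof -
  define x1 x2 x3 where "x1 = s22*s33 - s23^2" and "x2 = s13*s23 - s12*s33"
    and "x3 = s12*s23 - s13*s22"
  have "s11*x1 + s12*x2 + s13*x3 = sym3_det s11 s12 s13 s22 s23 s33"
    by (simp add: x1_def x2_def x3_def sym3_det_def algebra_simps power2_eq_square)
  moreover have "s12*x1 + s22*x2 + s23*x3 = 0" "s13*x1 + s23*x2 + s33*x3 = 0"
    by (simp_all add: x1_def x2_def x3_def algebra_simps power2_eq_square)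
  \<comment> \<open>Jacobi's identity for the 2 by 2 minors of the adjugate\<close>
  moreover have "(v1*x1 + v2*x2 + v3*x3)^2 =
      x1 * sym3_adjugate_form s11 s12 s13 s22 s23 s33 v1 v2 v3
      - sym3_det s11 s12 s13 s22 s23 s33 * (s33*v2^2 - 2*s23*v2*v3 + s22*v3^2)"
    by (simp add: x1_def x2_def x3_def sym3_det_def sym3_adjugate_form_def
        algebra_simps power2_eq_square)
  ultimately show thesis
    using that[of x1 x2 x3] det form column by (simp add: x1_def x2_def x3_def)
qed

lemma sym3_rank_one_kernel_vector:
  fixes s11 s12 s13 s22 s23 s33 v1 v2 v3 :: "'a::idom"
  assumes s11: "s11 \<noteq> 0"
    and minors: "s11*s22 = s12^2" "s11*s23 = s12*s13" "s11*s33 = s13^2"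
  obtains x1 x2 x3 where "x1 \<noteq> 0 \<or> x2 \<noteq> 0 \<or> x3 \<noteq> 0"
    "s11*x1 + s12*x2 + s13*x3 = 0" "s12*x1 + s22*x2 + s23*x3 = 0" "s13*x1 + s23*x2 + s33*x3 = 0"
    "v1*x1 + v2*x2 + v3*x3 = 0"
proof (cases "s12*v3 - s13*v2 = 0 \<and> s13*v1 - s11*v3 = 0 \<and> s11*v2 - s12*v1 = 0")
  case True
  show thesis
    by (rule that[of "- s12" s11 0])
      (use s11 minors True in \<open>auto simp: algebra_simps power2_eq_square\<close>)
next
  case False
  \<comment> \<open>every row is a multiple of the first, so the cross product of the first row with v works\<close>
  define x1 x2 x3 where "x1 = s12*v3 - s13*v2" and "x2 = s13*v1 - s11*v3"
    and "x3 = s11*v2 - s12*v1"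
  have row1: "s11*x1 + s12*x2 + s13*x3 = 0" and "v1*x1 + v2*x2 + v3*x3 = 0"
    by (simp_all add: x1_def x2_def x3_def algebra_simps)
  moreover have "s11 * (s12*x1 + s22*x2 + s23*x3) = s12 * (s11*x1 + s12*x2 + s13*x3)"
    and "s11 * (s13*x1 + s23*x2 + s33*x3) = s13 * (s11*x1 + s12*x2 + s13*x3)"
    using minors by (simp_all add: algebra_simps power2_eq_square) algebra+
  ultimately show thesis
    using that[of x1 x2 x3] False s11 by (simp add: x1_def x2_def x3_def)
qed

lemma sym3_kernel_meets_hyperplane:
  fixes s11 s12 s13 s22 s23 s33 v1 v2 v3 :: "'a::idom"
  assumes s11: "s11 \<noteq> 0"
    and det: "sym3_det s11 s12 s13 s22 s23 s33 = 0"
    and form: "sym3_adjugate_form s11 s12 s13 s22 s23 s33 v1 v2 v3 = 0"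
  obtains x1 x2 x3 where "x1 \<noteq> 0 \<or> x2 \<noteq> 0 \<or> x3 \<noteq> 0"
    "s11*x1 + s12*x2 + s13*x3 = 0" "s12*x1 + s22*x2 + s23*x3 = 0" "s13*x1 + s23*x2 + s33*x3 = 0"
    "v1*x1 + v2*x2 + v3*x3 = 0"
proof -
  consider (col1) "s22*s33 - s23^2 \<noteq> 0 \<or> s13*s23 - s12*s33 \<noteq> 0 \<or> s12*s23 - s13*s22 \<noteq> 0"
    | (col2) "s11*s33 - s13^2 \<noteq> 0 \<or> s13*s23 - s12*s33 \<noteq> 0 \<or> s12*s13 - s11*s23 \<noteq> 0"
    | (col3) "s11*s22 - s12^2 \<noteq> 0 \<or> s12*s13 - s11*s23 \<noteq> 0 \<or> s12*s23 - s13*s22 \<noteq> 0"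
    | (rank_one) "s11*s22 = s12^2" "s11*s23 = s12*s13" "s11*s33 = s13^2"
    by fastforce
  then show thesis
  proof cases
    case col1
    from det form col1 that show thesis by (rule sym3_adjugate_column_kernel_vector)
  next
    case col2
    have "sym3_det s22 s12 s23 s11 s13 s33 = 0" using det by (metis sym3_det_swap(1))
    moreover have "sym3_adjugate_form s22 s12 s23 s11 s13 s33 v2 v1 v3 = 0"
      using form by (metis sym3_adjugate_form_swap(1))
    moreover have "s11*s33 - s13^2 \<noteq> 0 \<or> s23*s13 - s12*s33 \<noteq> 0 \<or> s12*s13 - s23*s11 \<noteq> 0"
      using col2 by (simp add: ac_simps)
    ultimately obtain x1 x2 x3 where "x1 \<noteq> 0 \<or> x2 \<noteq> 0 \<or> x3 \<noteq> 0"
      "s22*x1 + s12*x2 + s23*x3 = 0" "s12*x1 + s11*x2 + s13*x3 = 0" "s23*x1 + s13*x2 + s33*x3 = 0"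
      "v2*x1 + v1*x2 + v3*x3 = 0"
      by (rule sym3_adjugate_column_kernel_vector)
    then show thesis by (intro that[of x2 x1 x3]) (auto simp: ac_simps)
  next
    case col3
    have "sym3_det s33 s23 s13 s22 s12 s11 = 0" using det by (metis sym3_det_swap(2))
    moreover have "sym3_adjugate_form s33 s23 s13 s22 s12 s11 v3 v2 v1 = 0"
      using form by (metis sym3_adjugate_form_swap(2))
    moreover have "s22*s11 - s12^2 \<noteq> 0 \<or> s13*s12 - s23*s11 \<noteq> 0 \<or> s23*s12 - s13*s22 \<noteq> 0"
      using col3 by (simp add: ac_simps)
    ultimately obtain x1 x2 x3 where "x1 \<noteq> 0 \<or> x2 \<noteq> 0 \<or> x3 \<noteq> 0"
      "s33*x1 + s23*x2 + s13*x3 = 0" "s23*x1 + s22*x2 + s12*x3 = 0" "s13*x1 + s12*x2 + s11*x3 = 0"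
      "v3*x1 + v2*x2 + v1*x3 = 0"
      by (rule sym3_adjugate_column_kernel_vector)
    then show thesis by (intro that[of x3 x2 x1]) (auto simp: ac_simps)
  next
    case rank_one
    from s11 rank_one that show thesis by (rule sym3_rank_one_kernel_vector)
  qed
qed

lemma sum_permutes_lessThan_4:
  "(\<Sum>q | q permutes {..<4::nat}. g q) =
   (\<Sum>b0\<in>{0,1,2,3}. \<Sum>b1\<in>{1,2,3}. \<Sum>b2\<in>{2,3}.
      g (transpose 0 b0 \<circ> (transpose 1 b1 \<circ> (transpose 2 b2 \<circ> (transpose 3 3 \<circ> id)))))"
proof -
  have "{..<4::nat} = {0,1,2,3}" by auto
  moreover have "{p. p permutes ({}::nat set)} = {id}" by (auto simp: permutes_empty)
  ultimately show ?thesis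
    by (simp add: sum_over_permutations_insert)
qed

lemma prod_lessThan_4: "(\<Prod>r<4::nat. f r) = f 0 * f 1 * f 2 * (f 3::'a::comm_monoid_mult)"
  by (simp add: eval_nat_numeral mult_ac)

lemma sum_lessThan_4: "(\<Sum>r<4::nat. f r) = f 0 + f 1 + f 2 + (f 3::'a::comm_monoid_add)"
  by (simp add: eval_nat_numeral add_ac)

lemma wedge4_expand:
  "wedge4 v =
     v 0 0 * v 1 1 * v 2 2 * v 3 3 - v 0 0 * v 1 1 * v 2 3 * v 3 2 - v 0 0 * v 1 2 * v 2 1 * v 3 3
   + v 0 0 * v 1 2 * v 2 3 * v 3 1 + v 0 0 * v 1 3 * v 2 1 * v 3 2 - v 0 0 * v 1 3 * v 2 2 * v 3 1
   - v 0 1 * v 1 0 * v 2 2 * v 3 3 + v 0 1 * v 1 0 * v 2 3 * v 3 2 + v 0 1 * v 1 2 * v 2 0 * v 3 3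
   - v 0 1 * v 1 2 * v 2 3 * v 3 0 - v 0 1 * v 1 3 * v 2 0 * v 3 2 + v 0 1 * v 1 3 * v 2 2 * v 3 0
   + v 0 2 * v 1 0 * v 2 1 * v 3 3 - v 0 2 * v 1 0 * v 2 3 * v 3 1 - v 0 2 * v 1 1 * v 2 0 * v 3 3
   + v 0 2 * v 1 1 * v 2 3 * v 3 0 + v 0 2 * v 1 3 * v 2 0 * v 3 1 - v 0 2 * v 1 3 * v 2 1 * v 3 0
   - v 0 3 * v 1 0 * v 2 1 * v 3 2 + v 0 3 * v 1 0 * v 2 2 * v 3 1 + v 0 3 * v 1 1 * v 2 0 * v 3 2
   - v 0 3 * v 1 1 * v 2 2 * v 3 0 - v 0 3 * v 1 2 * v 2 0 * v 3 1 + v 0 3 * v 1 2 * v 2 1 * v 3 0"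
  unfolding wedge4_def sum_permutes_lessThan_4 prod_lessThan_4
  by (simp add: sign_compose sign_swap_id permutation_swap_id permutation_compose
      transpose_def algebra_simps)

lemma finite_monoms: "finite (monoms k)"
proof -
  have "monoms k = multisets_of_size {..<4} k"
    by (auto simp: monoms_def multisets_of_size_def)
  then show ?thesis by auto
qed

lemma mult_if_one_zero: "(if P then 1 else 0) * x = (if P then x else (0::'a::semiring_1))"
  by simp

definition divided_power_monomial :: "nat multiset \<Rightarrow> nat multiset \<Rightarrow> 'a::zero_neq_one" where
  "divided_power_monomial M0 M = (if M = M0 then 1 else 0)"

lemma Gamma_divided_power_monomial:
  assumes "M0 \<in> monoms 4"
  shows "Gamma phi (divided_power_monomial M0) ys =
    (\<Sum>ws\<in>permutations_of_multiset M0. wedge4 (\<lambda>r. covec phi (basisU (ws ! r)) (ys r)))"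
  using assms finite_monoms[of 4]
  by (simp add: Gamma_def divided_power_monomial_def permutations_of_multiset_def
      mult_if_one_zero)

lemma covec_basisU:
  assumes "s < 4" "t < 4"
  shows "covec phi (basisU s) (basisU t) j = phi (add_mset t (add_mset s {#j#}))"
  using assms by (simp add: covec_def act_def basisU_def mult_if_one_zero)

lemma list_length_4_cases:
  assumes "length ws = 4"
  obtains a b c d where "ws = [a, b, c, d]"
  using assms
  by (cases ws; cases "tl ws"; cases "tl (tl ws)"; cases "tl (tl (tl ws))";
      cases "tl (tl (tl (tl ws)))") auto

lemma permutations_of_multiset_two_pairs:
  assumes "s \<noteq> t"
  shows "permutations_of_multiset {#s,s,t,t#} =
    {[s,s,t,t], [s,t,s,t], [s,t,t,s], [t,s,s,t], [t,s,t,s], [t,t,s,s]}"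
proof (rule set_eqI, rule iffI)
  fix ws assume "ws \<in> permutations_of_multiset {#s,s,t,t#}"
  then have ws_mset: "mset ws = {#s,s,t,t#}" by (simp add: permutations_of_multiset_def)
  then have "length ws = size {#s,s,t,t#}" by (metis size_mset)
  then have "length ws = 4" by (simp add: eval_nat_numeral)
  then obtain a b c d where ws: "ws = [a, b, c, d]" by (rule list_length_4_cases)
  have "set ws = set_mset {#s,s,t,t#}" using ws_mset by (metis set_mset_mset)
  then have "a \<in> {s,t}" "b \<in> {s,t}" "c \<in> {s,t}" "d \<in> {s,t}" using ws by auto
  moreover have "count_list ws s = count {#s,s,t,t#} s" "count_list ws t = count {#s,s,t,t#} t"
    using ws_mset by (metis count_mset)+
  ultimately show "ws \<in> {[s,s,t,t], [s,t,s,t], [s,t,t,s], [t,s,s,t], [t,s,t,s], [t,t,s,s]}"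
    using assms unfolding ws by auto
qed (auto simp: permutations_of_multiset_def add_mset_commute)

text \<open>Used by simp to decide equalities of concrete multisets, as in the definition of phi3.\<close>
lemma multiset_eq_iff_sorted_list_of_multiset:
  "(M::'a::linorder multiset) = N \<longleftrightarrow> sorted_list_of_multiset M = sorted_list_of_multiset N"
  by (metis mset_sorted_list_of_multiset)

context
  fixes a d e f h i k m n p :: "'a::idom"
begin

lemma Gamma_phi3_x2z2:
  "Gamma (phi3 a d e f h i k m n p) (divided_power_monomial {#0,0,2,2#}) basisU = a^2 * i^2"
  by (simp add: Gamma_divided_power_monomial monoms_def permutations_of_multiset_two_pairs
      wedge4_expand covec_basisU phi3_def multiset_eq_iff_sorted_list_of_multiset
      power2_eq_square algebra_simps)

lemma Gamma_phi3_x2y2: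
  "Gamma (phi3 a d e f h i k m n p) (divided_power_monomial {#0,0,1,1#}) basisU =
     - a * sym3_det a m n h p k"
  by (simp add: Gamma_divided_power_monomial monoms_def permutations_of_multiset_two_pairs
      wedge4_expand covec_basisU phi3_def multiset_eq_iff_sorted_list_of_multiset sym3_det_def
      power2_eq_square algebra_simps)

lemma Gamma_phi3_y4:
  "Gamma (phi3 a d e f h i k m n p) (divided_power_monomial {#1,1,1,1#}) basisU =
     - sym3_adjugate_form a m n h p k d e f"
  by (simp add: Gamma_divided_power_monomial monoms_def permutations_of_multiset_nonempty
      wedge4_expand covec_basisU phi3_def multiset_eq_iff_sorted_list_of_multiset
      sym3_adjugate_form_def power2_eq_square algebra_simps)

end

lemma monoms_2_cases:
  assumes "M \<in> monoms 2"
  obtains s t where "M = {#s,t#}" "s < 4" "t < 4"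
proof -
  have "size M = 2" and M_set: "set_mset M \<subseteq> {..<4}" using assms by (auto simp: monoms_def)
  then obtain s t where "M = {#s,t#}"
    by (metis numeral_2_eq_2 size_eq_Suc_imp_eq_union size_add_mset size_eq_0_iff_empty
        nat.inject)
  with M_set that show thesis by auto
qed

lemma act_phi3_eq_0:
  fixes a d e f h i k m n p :: "'a::idom" and l :: "nat \<Rightarrow> 'a"
  assumes "i = 0" "l 1 = 0"
    and "a * l 0 + m * l 2 + n * l 3 = 0" "m * l 0 + h * l 2 + p * l 3 = 0"
    and "n * l 0 + p * l 2 + k * l 3 = 0" "d * l 0 + e * l 2 + f * l 3 = 0"
    and "M \<in> monoms 2"
  shows "act l (phi3 a d e f h i k m n p) M = 0"
proof -
  obtain s t where M: "M = {#s,t#}" and "s < 4" "t < 4"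
    using \<open>M \<in> monoms 2\<close> by (rule monoms_2_cases)
  then have "s \<in> {0,1,2,3}" "t \<in> {0,1,2,3}" by auto
  then show ?thesis
    using assms unfolding M act_def sum_lessThan_4
    by (auto simp: phi3_def multiset_eq_iff_sorted_list_of_multiset algebra_simps)
qed

theorem proposition7p1:
  fixes a d e f h i k m n p :: "'a::idom"
  assumes ha: "a \<noteq> 0"
    and hb: "\<forall>l::nat \<Rightarrow> 'a. (\<exists>j<4. l j \<noteq> 0) \<longrightarrow>
               (\<exists>M\<in>monoms 2. act l (phi3 a d e f h i k m n p) M \<noteq> 0)"
  shows "\<exists>(c::nat multiset \<Rightarrow> 'a) (ys::nat \<Rightarrow> nat \<Rightarrow> 'a).
           Gamma (phi3 a d e f h i k m n p) c ys \<noteq> 0"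
proof (rule ccontr)
  assume "\<not> ?thesis"
  then have Gamma_0: "\<And>c ys. Gamma (phi3 a d e f h i k m n p) c ys = 0" by blast
  have i: "i = 0" using Gamma_0 Gamma_phi3_x2z2 ha by (metis mult_eq_0_iff power_not_zero)
  have det: "sym3_det a m n h p k = 0"
    using Gamma_0 Gamma_phi3_x2y2 ha by (metis mult_eq_0_iff neg_equal_0_iff_equal)
  have form: "sym3_adjugate_form a m n h p k d e f = 0"
    using Gamma_0 Gamma_phi3_y4 by (metis neg_equal_0_iff_equal)
  obtain x1 x2 x3 where nonzero: "x1 \<noteq> 0 \<or> x2 \<noteq> 0 \<or> x3 \<noteq> 0"
    and kernel: "a*x1 + m*x2 + n*x3 = 0" "m*x1 + h*x2 + p*x3 = 0" "n*x1 + p*x2 + k*x3 = 0"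
      "d*x1 + e*x2 + f*x3 = 0"
    using ha det form by (rule sym3_kernel_meets_hyperplane)
  define l where "l = (!) [x1, 0, x2, x3]"
  then have "\<forall>M\<in>monoms 2. act l (phi3 a d e f h i k m n p) M = 0"
    using i kernel by (auto intro!: act_phi3_eq_0)
  then have "\<forall>j<4. l j = 0" using hb by blast
  then have "l 0 = 0" "l 2 = 0" "l 3 = 0" by simp_all
  with nonzero show False by (simp add: l_def)
qed

end
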